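(* Let $\mathcal L:\mathbb F^{q\times q}\to\mathbb F^{n\times n}$ be linear, $m=\operatorname{rank}\mathbb L$, and let $L_1,\ldots,L_m$, $A_1,\ldots,A_m$, $B_1,\ldots,B_m$ be as in the construction below. The following are equivalent: (i) $\mathcal L$ is $*$-linear; (ii) $L=\sum_{k=1}^m\overline{L_k}\otimes A_k$; (iii) $L_k=\sum_{l=1}^m\vec{\mathbf 1}_n^*(B_k\circ\overline{L_l})\vec{\mathbf 1}_q\,A_l$ for $k=1,\ldots,m$. If these hold, then $\vec{\mathbf 1}_n^*(B_k\circ\overline{L_l})\vec{\mathbf 1}_q=\vec{\mathbf 1}_n^*(\overline{B_l}\circ L_k)\vec{\mathbf 1}_q$ for all $k,l=1,\ldots,m$.
   Context: $\mathbb F\in\{\mathbb R,\mathbb C\}$; $\otimes$ Kronecker, $\circ$ Hadamard product, $\vec{\mathbf 1}_p$ all-ones vector, $\overline X$ entrywise conjugate. $*$-linear: $\mathcal L(V^* )=\mathcal L(V)^*$. Matricization $L\in\mathbb F^{n^2\times q^2}$ with $L\operatorname{vec}(V)=\operatorname{vec}(\mathcal L(V))$ (column-stacking), $L=[L_{ij}]$, $1\le i\le n$, $1\le j\le q$, $L_{ij}\in\mathbb F^{n\times q}$; Choi matrix $\mathbb L=[\mathcal L(\mathcal E^{(q)}_{ij})]_{i,j=1}^q$, $m=\operatorname{rank}\mathbb L=\dim\operatorname{span}\{L_{ij}\}$. Construction: $L_1,\ldots,L_m$ span $\operatorname{span}\{L_{ij}\}$; $L_{ij}=\sum_k\alpha^{ij}_kL_k$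 (unique), $L_k=\sum_{i,j}\beta^k_{ij}L_{ij}$ (any choice); $A_k$ has $(i,j)$ entry $\overline{\alpha^{ij}_k}$, $B_k$ has $(i,j)$ entry $\beta^k_{ij}$. (One always has $L=\sum_k\overline{A_k}\otimes L_k$.) *)

theory Defs
  imports "Jordan_Normal_Form.Schur_Decomposition" "Jordan_Normal_Form.DL_Rank"
begin

text \<open>All indices are 0-based. Matrices are Jordan_Normal_Form matrices.\<close>

definition vec_cs :: "'a mat \<Rightarrow> 'a vec" where
  "vec_cs A = vec (dim_row A * dim_col A) (\<lambda>k. A $$ (k mod dim_row A, k div dim_row A))"

definition kron :: "'a :: times mat \<Rightarrow> 'a mat \<Rightarrow> 'a mat" where
  "kron A B = mat (dim_row A * dim_row B) (dim_col A * dim_col B)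
     (\<lambda>(r, s). A $$ (r div dim_row B, s div dim_col B) * B $$ (r mod dim_row B, s mod dim_col B))"

definition hadamard :: "'a :: times mat \<Rightarrow> 'a mat \<Rightarrow> 'a mat" where
  "hadamard A B = mat (dim_row A) (dim_col A) (\<lambda>ij. A $$ ij * B $$ ij)"

definition mconj :: "'a :: conjugate mat \<Rightarrow> 'a mat" where
  "mconj A = map_mat conjugate A"

definition ones_vec :: "nat \<Rightarrow> 'a :: one vec" where
  "ones_vec p = vec p (\<lambda>_. 1)"

definition Emat :: "nat \<Rightarrow> nat \<Rightarrow> nat \<Rightarrow> 'a :: zero_neq_one mat" where
  "Emat q i j = mat q q (\<lambda>(a, b). if a = i \<and> b = j then 1 else 0)"

definition msum :: "nat \<Rightarrow> nat \<Rightarrow> ('b \<Rightarrow> 'a :: comm_monoid_add mat) \<Rightarrow> 'b set \<Rightarrow> 'a mat" where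
  "msum r c f K = mat r c (\<lambda>ij. \<Sum>k\<in>K. f k $$ ij)"

definition blk :: "'a mat \<Rightarrow> nat \<Rightarrow> nat \<Rightarrow> nat \<Rightarrow> nat \<Rightarrow> 'a mat" where
  "blk L n q i j = mat n q (\<lambda>(a, c). L $$ (i * n + a, j * q + c))"

definition choi :: "('a :: zero_neq_one mat \<Rightarrow> 'a mat) \<Rightarrow> nat \<Rightarrow> nat \<Rightarrow> 'a mat" where
  "choi \<L> n q = mat (q * n) (q * n)
     (\<lambda>(r, s). (\<L> (Emat q (r div n) (s div n))) $$ (r mod n, s mod n))"

definition lin_map :: "nat \<Rightarrow> nat \<Rightarrow> ('a :: field mat \<Rightarrow> 'a mat) \<Rightarrow> bool" where
  "lin_map q n \<L> \<longleftrightarrow>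
     (\<forall>V \<in> carrier_mat q q. \<L> V \<in> carrier_mat n n) \<and>
     (\<forall>V \<in> carrier_mat q q. \<forall>W \<in> carrier_mat q q. \<L> (V + W) = \<L> V + \<L> W) \<and>
     (\<forall>V \<in> carrier_mat q q. \<forall>c. \<L> (c \<cdot>\<^sub>m V) = c \<cdot>\<^sub>m \<L> V)"

definition star_linear :: "nat \<Rightarrow> ('a :: conjugatable_field mat \<Rightarrow> 'a mat) \<Rightarrow> bool" where
  "star_linear q \<L> \<longleftrightarrow> (\<forall>V \<in> carrier_mat q q. \<L> (mat_adjoint V) = mat_adjoint (\<L> V))"

definition Amat :: "nat \<Rightarrow> nat \<Rightarrow> (nat \<Rightarrow> nat \<Rightarrow> nat \<Rightarrow> 'a :: conjugate) \<Rightarrow> nat \<Rightarrow> 'a mat" where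
  "Amat n q \<alpha> k = mat n q (\<lambda>(i, j). conjugate (\<alpha> i j k))"

definition Bmat :: "nat \<Rightarrow> nat \<Rightarrow> (nat \<Rightarrow> nat \<Rightarrow> nat \<Rightarrow> 'a) \<Rightarrow> nat \<Rightarrow> 'a mat" where
  "Bmat n q \<beta> k = mat n q (\<lambda>(i, j). \<beta> k i j)"

definition onesform :: "nat \<Rightarrow> nat \<Rightarrow> 'a :: comm_ring_1 mat \<Rightarrow> 'a" where
  "onesform n q M = ones_vec n \<bullet> (M *\<^sub>v ones_vec q)"

end

theory Submission
  imports Defs
begin

(* Write L_ij for the n x q blocks of the matricization and gamma_kl for 1^*(B_k o conj L_l)1.
   Up to reshaping, the blocks are the columns of the Choi matrix, so rank m forces L_1, ..., L_m
   to be linearly independent, and the coefficient families are biorthogonal: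
   sum_ij alpha^ij_l beta^k_ij = delta_kl.  *-linearity is equivalent to the block symmetry
   L_ij(a,c) = conj (L_ac(i,j)), which is (ii) read entrywise.  Substituting the symmetry into
   L_k = sum_ij beta^k_ij L_ij gives (iii); conversely, (iii) and biorthogonality make gamma
   Hermitian, which is the final claim, and then L_ij(a,c) = sum_kl alpha^ij_k gamma_kl conj (alpha^ac_l)
   is visibly symmetric. *)

lemma conjugate_one [simp]: "conjugate (1 :: 'a :: {conjugatable_ring, ring_1}) = 1"
proof -
  have "conjugate (1::'a) = conjugate (conjugate (conjugate 1 * 1))" by simp
  also have "\<dots> = 1" by (simp only: conjugate_dist_mul conjugate_id mult_1_left)
  finally show ?thesis .
qed

lemma mult_index_bound: "a < n \<Longrightarrow> i < p \<Longrightarrow> i * n + a < p * (n :: nat)"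
proof -
  assume "a < n" "i < p"
  then have "i * n + a < Suc i * n" by simp
  also have "\<dots> \<le> p * n" using \<open>i < p\<close> by (intro mult_right_mono) auto
  finally show ?thesis .
qed

lemma mult_index_split:
  assumes "r < p * (n :: nat)"
  shows "r div n < p" "r mod n < n" "r = r div n * n + r mod n"
proof -
  have "n > 0" using assms by (cases n) auto
  then show "r div n < p" "r mod n < n" "r = r div n * n + r mod n"
    using assms by (simp_all add: less_mult_imp_div_less)
qed

lemma sum_lessThan_mult: "(\<Sum>s<p * q. f s) = (\<Sum>j<p. \<Sum>c<q. f (j * q + c :: nat))"
proof -
  have "(\<Sum>s<p * q. f s) = (\<Sum>j<p. sum f {j * q..<j * q + q})" by (rule sum.nat_group[symmetric])
  also have "\<dots> = (\<Sum>j<p. \<Sum>c<q. f (j * q + c))"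
  proof (rule sum.cong[OF refl])
    fix j
    have "sum f {0 + j * q..<q + j * q} = (\<Sum>c = 0..<q. f (c + j * q))"
      by (rule sum.shift_bounds_nat_ivl)
    then show "sum f {j * q..<j * q + q} = (\<Sum>c<q. f (j * q + c))"
      by (simp add: atLeast0LessThan add.commute)
  qed
  finally show ?thesis .
qed

lemma mat_adjoint_dims [simp]:
  "dim_row (mat_adjoint A) = dim_col A" "dim_col (mat_adjoint A) = dim_row A"
  by (auto simp: mat_adjoint_def)

lemma mat_adjoint_index [simp]:
  "i < dim_col A \<Longrightarrow> j < dim_row A \<Longrightarrow> mat_adjoint A $$ (i, j) = conjugate (A $$ (j, i))"
  by (simp add: mat_adjoint_def mat_of_rows_index)

lemma mat_adjoint_Emat: "c < q \<Longrightarrow> j < q \<Longrightarrow> mat_adjoint (Emat q c j :: 'a :: conjugatable_field mat) = Emat q j c"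
  by (rule eq_matI) (auto simp: Emat_def)

lemma onesform_eq_sum: "M \<in> carrier_mat n q \<Longrightarrow> onesform n q M = (\<Sum>i<n. \<Sum>j<q. M $$ (i, j))"
  unfolding onesform_def ones_vec_def
  by (simp add: scalar_prod_def mult_mat_vec_def atLeast0LessThan)

lemma sum_eliminate:
  fixes f g x :: "'b \<Rightarrow> 'a :: field"
  assumes "finite K" "l \<in> K" "f l \<noteq> 0" "(\<Sum>k\<in>K. f k * x k) = 0"
  shows "(\<Sum>k\<in>K. g k * x k) = (\<Sum>k\<in>K - {l}. (g k - g l * f k / f l) * x k)"
proof -
  have split: "(\<Sum>k\<in>K. h k) = h l + (\<Sum>k\<in>K - {l}. h k)" for h :: "'b \<Rightarrow> 'a"
    using assms(1,2) by (simp add: sum.remove)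
  have "x l = - (\<Sum>k\<in>K - {l}. f k * x k) / f l"
    using assms(3,4) split[of "\<lambda>k. f k * x k"] by (simp add: field_simps eq_neg_iff_add_eq_0)
  then show ?thesis
    using split[of "\<lambda>k. g k * x k"]
    by (simp add: algebra_simps sum_subtractf sum_distrib_left sum_divide_distrib)
qed

context vec_space
begin

lemma rank_mono_span:
  assumes "A \<in> carrier_mat n nc" "B \<in> carrier_mat n nc'"
    and "set (cols A) \<subseteq> span (set (cols B))"
  shows "rank A \<le> rank B"
proof -
  define W where "W = span (set (cols B))"
  have cB: "set (cols B) \<subseteq> carrier_vec n" and cA: "set (cols A) \<subseteq> carrier_vec n"
    using assms(1,2) cols_dim by blast+
  have WV: "VectorSpace.subspace class_ring W V"
    unfolding W_def using span_is_subspace cB by simp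
  have "span (set (cols A)) \<subseteq> W"
    unfolding W_def using assms(3) cB by (simp add: span_is_submodule span_is_subset)
  then have "VectorSpace.subspace class_ring (span (set (cols A))) (vs W)"
    using nested_subspaces WV span_is_subspace cA by blast
  moreover have "vectorspace.fin_dim class_ring (vs W)"
    unfolding W_def using fin_dim_span_cols assms(2) by blast
  ultimately show ?thesis
    using vectorspace.subspace_dim[OF subspace_is_vs[OF WV]] fin_dim_span_cols[OF assms(1)]
    unfolding rank_def W_def by simp
qed

lemma lincomb_vec_in_span:
  assumes "S \<subseteq> carrier_vec n" "finite K" "w ` K \<subseteq> S"
  shows "vec n (\<lambda>r. \<Sum>k\<in>K. g k * w k $ r) \<in> span S"
  using assms(2,3)
proof (induction K rule: finite_induct)
  case empty
  have "submodule class_ring (span S) V"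
    using span_is_submodule assms(1) by (simp add: module_vec_simps)
  moreover have "vec n (\<lambda>r. \<Sum>k\<in>{}. g k * w k $ r) = zero V"
    by (auto simp: module_vec_simps)
  ultimately show ?case
    using submodule.zero_closed by metis
next
  case (insert x F)
  have wx: "w x \<in> span S" "w x \<in> carrier_vec n"
    using insert.prems assms(1) span_mem by auto
  have "vec n (\<lambda>r. \<Sum>k\<in>insert x F. g k * w k $ r) = g x \<cdot>\<^sub>v w x + vec n (\<lambda>r. \<Sum>k\<in>F. g k * w k $ r)"
    using insert.hyps wx(2) by auto
  then show ?case
    using span_add1[OF assms(1) smult_in_span[OF assms(1) wx(1)]] insert by auto
qed

lemma rank_le_card_if_cols_in_span:
  assumes "A \<in> carrier_mat n nc" "finite K" "w ` K \<subseteq> carrier_vec n"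
    and "set (cols A) \<subseteq> span (w ` K)"
  shows "rank A \<le> card K"
proof -
  obtain ks where ks: "set ks = K" "distinct ks"
    using finite_distinct_list[OF assms(2)] by blast
  define B where "B = mat_of_cols n (map w ks)"
  have cols_B: "set (cols B) = w ` K"
    unfolding B_def using assms(3) ks(1) by (subst cols_mat_of_cols) auto
  have "B \<in> carrier_mat n (card K)"
    unfolding B_def using mat_of_cols_carrier(1) ks by (metis distinct_card length_map)
  then show ?thesis
    using rank_mono_span[OF assms(1)] rank_le_nc assms(4) cols_B by (metis order_trans)
qed

lemma rank_less_if_cols_combine_dependent:
  assumes A: "A \<in> carrier_mat n nc" and w: "\<And>k. w k \<in> carrier_vec n"
    and cols: "\<And>s. s < nc \<Longrightarrow> \<exists>g. col A s = vec n (\<lambda>r. \<Sum>k<m. g k * w k $ r)"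
    and dependent: "\<And>r. r < n \<Longrightarrow> (\<Sum>k<m. f k * w k $ r) = 0" and "l < m" "f l \<noteq> 0"
  shows "rank A < m"
proof -
  have "set (cols A) \<subseteq> span (w ` ({..<m} - {l}))"
  proof
    fix v assume "v \<in> set (cols A)"
    then obtain s where "s < nc" and v: "v = col A s"
      using A by (auto simp: in_set_conv_nth)
    then obtain g where g: "v = vec n (\<lambda>r. \<Sum>k<m. g k * w k $ r)" using cols by blast
    have "v = vec n (\<lambda>r. \<Sum>k\<in>{..<m} - {l}. (g k - g l * f k / f l) * w k $ r)"
      unfolding g using sum_eliminate[of "{..<m}" l f] dependent \<open>l < m\<close> \<open>f l \<noteq> 0\<close> by auto
    also have "\<dots> \<in> span (w ` ({..<m} - {l}))"
      using w by (intro lincomb_vec_in_span) auto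
    finally show "v \<in> span (w ` ({..<m} - {l}))" .
  qed
  then have "rank A \<le> card ({..<m} - {l})"
    using w by (intro rank_le_card_if_cols_in_span[OF A]) auto
  then show ?thesis using \<open>l < m\<close> by simp
qed

end

lemma eq_mat_block_indexI:
  assumes "A \<in> carrier_mat (p * n) (r * q)" "B \<in> carrier_mat (p * n) (r * q)"
    and "\<And>i a j c. \<lbrakk>i < p; a < n; j < r; c < q\<rbrakk> \<Longrightarrow> A $$ (i * n + a, j * q + c) = B $$ (i * n + a, j * q + c)"
  shows "A = B"
proof (rule eq_matI)
  fix s t assume "s < dim_row B" "t < dim_col B"
  then have "s < p * n" "t < r * q" using assms(2) by auto
  then show "A $$ (s, t) = B $$ (s, t)"
    using assms(3)[of "s div n" "s mod n" "t div q" "t mod q"] mult_index_split[of s p n] mult_index_split[of t r q]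
    by simp
qed (use assms in auto)

definition hermitian_blocks :: "nat \<Rightarrow> nat \<Rightarrow> (nat \<Rightarrow> nat \<Rightarrow> nat \<Rightarrow> nat \<Rightarrow> 'a :: conjugate) \<Rightarrow> bool"
  where "hermitian_blocks n q blocks \<longleftrightarrow>
    (\<forall>i<n. \<forall>j<q. \<forall>a<n. \<forall>c<q. blocks i j a c = conjugate (blocks a c i j))"

(* blocks i j a c stands for entry (a,c) of the block L_ij, basis k a c for entry (a,c) of L_k. *)
locale block_expansion =
  fixes n q m :: nat
    and blocks :: "nat \<Rightarrow> nat \<Rightarrow> nat \<Rightarrow> nat \<Rightarrow> 'a :: conjugatable_field"
    and basis :: "nat \<Rightarrow> nat \<Rightarrow> nat \<Rightarrow> 'a"
    and \<alpha> \<beta> :: "nat \<Rightarrow> nat \<Rightarrow> nat \<Rightarrow> 'a"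
  assumes expand: "\<lbrakk>i < n; j < q; a < n; c < q\<rbrakk> \<Longrightarrow> blocks i j a c = (\<Sum>k<m. \<alpha> i j k * basis k a c)"
    and coords: "\<lbrakk>k < m; a < n; c < q\<rbrakk> \<Longrightarrow> basis k a c = (\<Sum>i<n. \<Sum>j<q. \<beta> k i j * blocks i j a c)"
    and independent: "\<lbrakk>\<And>a c. \<lbrakk>a < n; c < q\<rbrakk> \<Longrightarrow> (\<Sum>l<m. f l * basis l a c) = 0; l < m\<rbrakk> \<Longrightarrow> f l = 0"
begin

definition gamma :: "nat \<Rightarrow> nat \<Rightarrow> 'a"
  where "gamma k l = (\<Sum>i<n. \<Sum>j<q. \<beta> k i j * conjugate (basis l i j))"

definition gamma_expansion :: bool
  where "gamma_expansion \<longleftrightarrow>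
    (\<forall>k<m. \<forall>a<n. \<forall>c<q. basis k a c = (\<Sum>l<m. gamma k l * conjugate (\<alpha> a c l)))"

lemma coords_expand:
  assumes "k < m" "a < n" "c < q"
  shows "basis k a c = (\<Sum>l<m. (\<Sum>i<n. \<Sum>j<q. \<alpha> i j l * \<beta> k i j) * basis l a c)"
proof -
  have "basis k a c = (\<Sum>i<n. \<Sum>j<q. \<beta> k i j * (\<Sum>l<m. \<alpha> i j l * basis l a c))"
    using assms by (simp only: coords) (intro sum.cong refl, simp add: expand)
  also have "\<dots> = (\<Sum>i<n. \<Sum>j<q. \<Sum>l<m. \<alpha> i j l * \<beta> k i j * basis l a c)"
    by (simp add: sum_distrib_left mult_ac)
  also have "\<dots> = (\<Sum>l<m. \<Sum>i<n. \<Sum>j<q. \<alpha> i j l * \<beta> k i j * basis l a c)"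
    by (subst sum.swap, rule sum.cong[OF refl], rule sum.swap)
  finally show ?thesis by (simp add: sum_distrib_right)
qed

lemma alpha_beta_biorthogonal:
  assumes "l < m" "k < m"
  shows "(\<Sum>i<n. \<Sum>j<q. \<alpha> i j l * \<beta> k i j) = (if l = k then 1 else 0)"
proof -
  define f where "f l' = (\<Sum>i<n. \<Sum>j<q. \<alpha> i j l' * \<beta> k i j) - (if l' = k then 1 else 0)" for l'
  have "(\<Sum>l'<m. f l' * basis l' a c) = 0" if "a < n" "c < q" for a c
  proof -
    have "(\<Sum>l'<m. (if l' = k then 1 else 0) * basis l' a c) = basis k a c"
      using \<open>k < m\<close> by (simp add: if_distrib[of "\<lambda>x. x * _"] cong: if_cong)
    then show ?thesis
      using coords_expand[OF \<open>k < m\<close> that]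
      by (simp add: f_def left_diff_distrib sum_subtractf)
  qed
  from independent[OF this \<open>l < m\<close>] show ?thesis by (simp add: f_def)
qed

lemma gamma_expansion_if_hermitian:
  assumes "hermitian_blocks n q blocks"
  shows gamma_expansion
  unfolding gamma_expansion_def
proof (intro allI impI)
  fix k a c assume "k < m" "a < n" "c < q"
  have "basis k a c = (\<Sum>i<n. \<Sum>j<q. \<beta> k i j * conjugate (\<Sum>l<m. \<alpha> a c l * basis l i j))"
    unfolding coords[OF \<open>k < m\<close> \<open>a < n\<close> \<open>c < q\<close>]
  proof (intro sum.cong refl)
    fix i j assume "i \<in> {..<n}" "j \<in> {..<q}"
    then have "blocks i j a c = conjugate (blocks a c i j)"
      using assms \<open>a < n\<close> \<open>c < q\<close> unfolding hermitian_blocks_def by blast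
    also have "blocks a c i j = (\<Sum>l<m. \<alpha> a c l * basis l i j)"
      using \<open>i \<in> {..<n}\<close> \<open>j \<in> {..<q}\<close> \<open>a < n\<close> \<open>c < q\<close> by (simp add: expand)
    finally show "\<beta> k i j * blocks i j a c = \<beta> k i j * conjugate (\<Sum>l<m. \<alpha> a c l * basis l i j)"
      by simp
  qed
  also have "\<dots> = (\<Sum>i<n. \<Sum>j<q. \<Sum>l<m. \<beta> k i j * conjugate (basis l i j) * conjugate (\<alpha> a c l))"
    by (simp add: sum_conjugate conjugate_dist_mul sum_distrib_left mult_ac)
  also have "\<dots> = (\<Sum>l<m. \<Sum>i<n. \<Sum>j<q. \<beta> k i j * conjugate (basis l i j) * conjugate (\<alpha> a c l))"
    by (subst sum.swap, rule sum.cong[OF refl], rule sum.swap)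
  finally show "basis k a c = (\<Sum>l<m. gamma k l * conjugate (\<alpha> a c l))"
    by (simp add: gamma_def sum_distrib_right)
qed

lemma gamma_hermitian:
  assumes gamma_expansion "k < m" "l < m"
  shows "gamma k l = conjugate (gamma l k)"
proof -
  have "gamma k l = (\<Sum>i<n. \<Sum>j<q. \<beta> k i j * conjugate (\<Sum>l'<m. gamma l l' * conjugate (\<alpha> i j l')))"
    using assms unfolding gamma_def[of k l] gamma_expansion_def by (intro sum.cong refl) simp
  also have "\<dots> = (\<Sum>i<n. \<Sum>j<q. \<Sum>l'<m. conjugate (gamma l l') * (\<alpha> i j l' * \<beta> k i j))"
    by (simp add: sum_conjugate conjugate_dist_mul sum_distrib_left mult_ac)
  also have "\<dots> = (\<Sum>l'<m. conjugate (gamma l l') * (\<Sum>i<n. \<Sum>j<q. \<alpha> i j l' * \<beta> k i j))"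
    by (subst sum.swap, subst (2) sum.swap) (simp add: sum_distrib_left)
  also have "\<dots> = conjugate (gamma l k)"
    using \<open>k < m\<close> by (simp add: alpha_beta_biorthogonal if_distrib[of "\<lambda>x. _ * x"] cong: if_cong)
  finally show ?thesis .
qed

lemma blocks_eq_sesquilinear_form:
  assumes gamma_expansion "i < n" "j < q" "a < n" "c < q"
  shows "blocks i j a c = (\<Sum>k<m. \<Sum>l<m. \<alpha> i j k * gamma k l * conjugate (\<alpha> a c l))"
proof -
  have "blocks i j a c = (\<Sum>k<m. \<alpha> i j k * basis k a c)"
    using assms by (simp add: expand)
  also have "\<dots> = (\<Sum>k<m. \<alpha> i j k * (\<Sum>l<m. gamma k l * conjugate (\<alpha> a c l)))"
    using assms unfolding gamma_expansion_def by (intro sum.cong refl) simp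
  finally show ?thesis by (simp add: sum_distrib_left mult_ac)
qed

lemma hermitian_if_gamma_expansion:
  assumes gamma_expansion
  shows "hermitian_blocks n q blocks"
  unfolding hermitian_blocks_def
proof (intro allI impI)
  fix i j a c assume ij: "i < n" "j < q" and ac: "a < n" "c < q"
  have "conjugate (blocks a c i j) = (\<Sum>l<m. \<Sum>k<m. \<alpha> i j k * conjugate (gamma l k) * conjugate (\<alpha> a c l))"
    using blocks_eq_sesquilinear_form[OF assms ac ij]
    by (simp add: sum_conjugate conjugate_dist_mul mult_ac)
  also have "\<dots> = (\<Sum>k<m. \<Sum>l<m. \<alpha> i j k * gamma k l * conjugate (\<alpha> a c l))"
  proof (subst sum.swap, intro sum.cong refl)
    fix k l assume "k \<in> {..<m}" "l \<in> {..<m}"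
    then show "\<alpha> i j k * conjugate (gamma l k) * conjugate (\<alpha> a c l)
             = \<alpha> i j k * gamma k l * conjugate (\<alpha> a c l)"
      using gamma_hermitian[OF assms, of k l] by simp
  qed
  finally show "blocks i j a c = conjugate (blocks a c i j)"
    using blocks_eq_sesquilinear_form[OF assms ij ac] by simp
qed

lemma hermitian_blocks_iff_gamma_expansion: "hermitian_blocks n q blocks \<longleftrightarrow> gamma_expansion"
  using gamma_expansion_if_hermitian hermitian_if_gamma_expansion by blast

end

locale matricization =
  fixes \<L> :: "'a :: conjugatable_field mat \<Rightarrow> 'a mat" and n q :: nat and L :: "'a mat"
  assumes map_carrier: "V \<in> carrier_mat q q \<Longrightarrow> \<L> V \<in> carrier_mat n n"
    and L_carrier: "L \<in> carrier_mat (n * n) (q * q)"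
    and L_matricization: "V \<in> carrier_mat q q \<Longrightarrow> L *\<^sub>v vec_cs V = vec_cs (\<L> V)"
begin

lemma map_entry:
  assumes V: "V \<in> carrier_mat q q" and "a < n" "i < n"
  shows "\<L> V $$ (a, i) = (\<Sum>j<q. \<Sum>c<q. L $$ (i * n + a, j * q + c) * V $$ (c, j))"
proof -
  have idx: "i * n + a < n * n" using mult_index_bound[OF \<open>a < n\<close> \<open>i < n\<close>] .
  have "\<L> V $$ (a, i) = vec_cs (\<L> V) $ (i * n + a)"
    using map_carrier[OF V] idx \<open>a < n\<close> by (simp add: vec_cs_def)
  also have "\<dots> = (L *\<^sub>v vec_cs V) $ (i * n + a)"
    using L_matricization[OF V] by simp
  also have "\<dots> = (\<Sum>s<q * q. L $$ (i * n + a, s) * V $$ (s mod q, s div q))"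
    using L_carrier V idx by (simp add: mult_mat_vec_def scalar_prod_def vec_cs_def atLeast0LessThan)
  also have "\<dots> = (\<Sum>j<q. \<Sum>c<q. L $$ (i * n + a, j * q + c) * V $$ (c, j))"
    by (simp add: sum_lessThan_mult)
  finally show ?thesis .
qed

lemma map_Emat_entry:
  assumes "a < n" "i < n" "c < q" "j < q"
  shows "\<L> (Emat q c j) $$ (a, i) = L $$ (i * n + a, j * q + c)"
proof -
  have "\<L> (Emat q c j) $$ (a, i) = (\<Sum>j'<q. \<Sum>c'<q. L $$ (i * n + a, j' * q + c') * Emat q c j $$ (c', j'))"
    using assms by (intro map_entry) (auto simp: Emat_def)
  also have "\<dots> = (\<Sum>j'<q. if j' = j then \<Sum>c'<q. if c' = c then L $$ (i * n + a, j' * q + c') else 0 else 0)"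
    by (intro sum.cong refl) (auto simp: Emat_def if_distrib[of "\<lambda>x. _ * x"] cong: if_cong)
  also have "\<dots> = L $$ (i * n + a, j * q + c)"
    using assms by simp
  finally show ?thesis .
qed

lemma star_linear_iff_hermitian_blocks:
  "star_linear q \<L> \<longleftrightarrow> hermitian_blocks n q (\<lambda>i j a c. L $$ (i * n + a, j * q + c))"
proof
  assume star: "star_linear q \<L>"
  show "hermitian_blocks n q (\<lambda>i j a c. L $$ (i * n + a, j * q + c))"
    unfolding hermitian_blocks_def
  proof (intro allI impI)
    fix i j a c assume "i < n" "j < q" "a < n" "c < q"
    have E: "(Emat q j c :: 'a mat) \<in> carrier_mat q q" by (simp add: Emat_def)
    have "L $$ (i * n + a, j * q + c) = \<L> (mat_adjoint (Emat q j c)) $$ (a, i)"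
      using \<open>i < n\<close> \<open>j < q\<close> \<open>a < n\<close> \<open>c < q\<close> by (simp add: mat_adjoint_Emat map_Emat_entry)
    also have "\<dots> = mat_adjoint (\<L> (Emat q j c)) $$ (a, i)"
      using star E unfolding star_linear_def by simp
    also have "\<dots> = conjugate (\<L> (Emat q j c) $$ (i, a))"
      using map_carrier[OF E] \<open>i < n\<close> \<open>a < n\<close> by simp
    also have "\<dots> = conjugate (L $$ (a * n + i, c * q + j))"
      using \<open>i < n\<close> \<open>j < q\<close> \<open>a < n\<close> \<open>c < q\<close> by (simp add: map_Emat_entry)
    finally show "L $$ (i * n + a, j * q + c) = conjugate (L $$ (a * n + i, c * q + j))" .
  qed
next
  assume herm: "hermitian_blocks n q (\<lambda>i j a c. L $$ (i * n + a, j * q + c))"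
  show "star_linear q \<L>"
    unfolding star_linear_def
  proof
    fix V :: "'a mat" assume V: "V \<in> carrier_mat q q"
    have V': "mat_adjoint V \<in> carrier_mat q q" using V by auto
    show "\<L> (mat_adjoint V) = mat_adjoint (\<L> V)"
    proof (rule eq_matI)
      fix a i assume "a < dim_row (mat_adjoint (\<L> V))" "i < dim_col (mat_adjoint (\<L> V))"
      then have a: "a < n" and i: "i < n" using map_carrier[OF V] by auto
      have "\<L> (mat_adjoint V) $$ (a, i)
          = (\<Sum>j<q. \<Sum>c<q. conjugate (L $$ (a * n + i, c * q + j)) * conjugate (V $$ (j, c)))"
        unfolding map_entry[OF V' a i]
      proof (intro sum.cong refl)
        fix j c assume "j \<in> {..<q}" "c \<in> {..<q}"
        then have "L $$ (i * n + a, j * q + c) = conjugate (L $$ (a * n + i, c * q + j))"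
          using herm a i unfolding hermitian_blocks_def by blast
        then show "L $$ (i * n + a, j * q + c) * mat_adjoint V $$ (c, j)
                 = conjugate (L $$ (a * n + i, c * q + j)) * conjugate (V $$ (j, c))"
          using V \<open>j \<in> {..<q}\<close> \<open>c \<in> {..<q}\<close> by simp
      qed
      also have "\<dots> = conjugate (\<Sum>c<q. \<Sum>j<q. L $$ (a * n + i, c * q + j) * V $$ (j, c))"
        by (subst sum.swap) (simp add: sum_conjugate conjugate_dist_mul)
      also have "\<dots> = mat_adjoint (\<L> V) $$ (a, i)"
        using map_carrier[OF V] a i by (simp add: map_entry[OF V i a])
      finally show "\<L> (mat_adjoint V) $$ (a, i) = mat_adjoint (\<L> V) $$ (a, i)" .
    qed (use map_carrier[OF V] map_carrier[OF V'] in auto)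
  qed
qed

end

locale choi_construction = matricization \<L> n q L
  for \<L> :: "'a :: conjugatable_field mat \<Rightarrow> 'a mat" and n q :: nat and L :: "'a mat" +
  fixes m :: nat and Lk :: "nat \<Rightarrow> 'a mat" and \<alpha> \<beta> :: "nat \<Rightarrow> nat \<Rightarrow> nat \<Rightarrow> 'a"
  assumes m_rank: "m = vec_space.rank (q * n) (choi \<L> n q)"
    and Lk_carrier: "k < m \<Longrightarrow> Lk k \<in> carrier_mat n q"
    and alpha: "\<lbrakk>i < n; j < q\<rbrakk> \<Longrightarrow> blk L n q i j = msum n q (\<lambda>k. \<alpha> i j k \<cdot>\<^sub>m Lk k) {..<m}"
    and beta: "k < m \<Longrightarrow> Lk k = msum n q (\<lambda>(i, j). \<beta> k i j \<cdot>\<^sub>m blk L n q i j) ({..<n} \<times> {..<q})"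
begin

lemma L_entry_expansion:
  assumes "i < n" "j < q" "a < n" "c < q"
  shows "L $$ (i * n + a, j * q + c) = (\<Sum>k<m. \<alpha> i j k * Lk k $$ (a, c))"
proof -
  have "L $$ (i * n + a, j * q + c) = blk L n q i j $$ (a, c)"
    using assms by (simp add: blk_def)
  also have "\<dots> = (\<Sum>k<m. \<alpha> i j k * Lk k $$ (a, c))"
    using assms by (simp add: alpha msum_def) (intro sum.cong refl, simp add: carrier_matD[OF Lk_carrier])
  finally show ?thesis .
qed

lemma Lk_entry:
  assumes "k < m" "a < n" "c < q"
  shows "Lk k $$ (a, c) = (\<Sum>i<n. \<Sum>j<q. \<beta> k i j * L $$ (i * n + a, j * q + c))"
proof -
  have "Lk k $$ (a, c) = (\<Sum>(i, j)\<in>{..<n} \<times> {..<q}. \<beta> k i j * L $$ (i * n + a, j * q + c))"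
    using assms by (subst beta) (auto simp: msum_def blk_def intro!: sum.cong)
  then show ?thesis by (simp add: sum.cartesian_product)
qed

lemma choi_col_expansion:
  assumes "s < q * n"
  shows "col (choi \<L> n q) s
       = vec (q * n) (\<lambda>r. \<Sum>k<m. \<alpha> (s mod n) (s div n) k * Lk k $$ (r mod n, r div n))"
proof (rule eq_vecI)
  fix r assume "r < dim_vec (vec (q * n) (\<lambda>r. \<Sum>k<m. \<alpha> (s mod n) (s div n) k * Lk k $$ (r mod n, r div n)))"
  then have "r < q * n" by simp
  then show "col (choi \<L> n q) s $ r = vec (q * n) (\<lambda>r. \<Sum>k<m. \<alpha> (s mod n) (s div n) k * Lk k $$ (r mod n, r div n)) $ r"
    using assms mult_index_split[of r q n] mult_index_split[of s q n]
    by (simp add: choi_def map_Emat_entry L_entry_expansion)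
qed (simp add: choi_def)

lemma Lk_independent:
  assumes dependent: "\<And>a c. \<lbrakk>a < n; c < q\<rbrakk> \<Longrightarrow> (\<Sum>k<m. f k * Lk k $$ (a, c)) = 0" and "l < m"
  shows "f l = 0"
proof (rule ccontr)
  assume "f l \<noteq> 0"
  interpret VS: vec_space "TYPE('a)" "q * n" .
  define w where "w k = vec (q * n) (\<lambda>r. Lk k $$ (r mod n, r div n))" for k
  have "VS.rank (choi \<L> n q) < m"
  proof (rule VS.rank_less_if_cols_combine_dependent[of _ "q * n" w _ f, OF _ _ _ _ \<open>l < m\<close> \<open>f l \<noteq> 0\<close>])
    show "choi \<L> n q \<in> carrier_mat (q * n) (q * n)" by (simp add: choi_def)
    show "w k \<in> carrier_vec (q * n)" for k by (simp add: w_def)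
    show "\<exists>g. col (choi \<L> n q) s = vec (q * n) (\<lambda>r. \<Sum>k<m. g k * w k $ r)" if "s < q * n" for s
    proof
      show "col (choi \<L> n q) s = vec (q * n) (\<lambda>r. \<Sum>k<m. \<alpha> (s mod n) (s div n) k * w k $ r)"
        unfolding choi_col_expansion[OF that] w_def by (intro eq_vecI) auto
    qed
    show "(\<Sum>k<m. f k * w k $ r) = 0" if "r < q * n" for r
      using dependent mult_index_split[OF that] that by (simp add: w_def)
  qed
  then show False using m_rank by simp
qed

sublocale block_expansion n q m "\<lambda>i j a c. L $$ (i * n + a, j * q + c)" "\<lambda>k a c. Lk k $$ (a, c)" \<alpha> \<beta>
  by unfold_locales (fact L_entry_expansion Lk_entry Lk_independent)+

lemma L_eq_kron_sum_iff:
  "L = msum (n * n) (q * q) (\<lambda>k. kron (mconj (Lk k)) (Amat n q \<alpha> k)) {..<m}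
   \<longleftrightarrow> hermitian_blocks n q (\<lambda>i j a c. L $$ (i * n + a, j * q + c))"
proof -
  define R where "R = msum (n * n) (q * q) (\<lambda>k. kron (mconj (Lk k)) (Amat n q \<alpha> k)) {..<m}"
  have R_entry: "R $$ (i * n + a, j * q + c) = conjugate (L $$ (a * n + i, c * q + j))"
    if "i < n" "j < q" "a < n" "c < q" for i j a c
  proof -
    have "R $$ (i * n + a, j * q + c) = (\<Sum>k<m. conjugate (Lk k $$ (i, j)) * conjugate (\<alpha> a c k))"
      using that mult_index_bound[of a n i n] mult_index_bound[of c q j q]
      by (auto simp: R_def msum_def kron_def mconj_def Amat_def carrier_matD[OF Lk_carrier] intro!: sum.cong)
    also have "\<dots> = conjugate (L $$ (a * n + i, c * q + j))"
      using that by (simp add: L_entry_expansion sum_conjugate conjugate_dist_mul mult.commute)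
    finally show ?thesis .
  qed
  have "L = R \<longleftrightarrow> (\<forall>i<n. \<forall>j<q. \<forall>a<n. \<forall>c<q. L $$ (i * n + a, j * q + c) = R $$ (i * n + a, j * q + c))"
    using L_carrier by (auto intro: eq_mat_block_indexI simp: R_def msum_def)
  then show ?thesis
    unfolding hermitian_blocks_def R_def[symmetric] by (simp add: R_entry)
qed

lemma onesform_hadamard_eq_gamma:
  assumes "l < m"
  shows "onesform n q (hadamard (Bmat n q \<beta> k) (mconj (Lk l))) = gamma k l"
  using Lk_carrier[OF assms]
  by (simp add: onesform_eq_sum gamma_def hadamard_def Bmat_def mconj_def)

lemma onesform_hadamard_conj_eq_gamma:
  assumes "k < m"
  shows "onesform n q (hadamard (mconj (Bmat n q \<beta> l)) (Lk k)) = conjugate (gamma l k)"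
  using Lk_carrier[OF assms]
  by (simp add: onesform_eq_sum gamma_def hadamard_def Bmat_def mconj_def sum_conjugate conjugate_dist_mul)

lemma Lk_eq_msum_iff:
  "(\<forall>k<m. Lk k = msum n q (\<lambda>l. onesform n q (hadamard (Bmat n q \<beta> k) (mconj (Lk l))) \<cdot>\<^sub>m Amat n q \<alpha> l) {..<m})
   \<longleftrightarrow> gamma_expansion"
proof -
  have coeff: "(\<Sum>l<m. onesform n q (hadamard (Bmat n q \<beta> k) (mconj (Lk l))) * conjugate (\<alpha> a c l))
             = (\<Sum>l<m. gamma k l * conjugate (\<alpha> a c l))" for k a c
    by (intro sum.cong refl) (simp add: onesform_hadamard_eq_gamma)
  have "Lk k = msum n q (\<lambda>l. onesform n q (hadamard (Bmat n q \<beta> k) (mconj (Lk l))) \<cdot>\<^sub>m Amat n q \<alpha> l) {..<m}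
    \<longleftrightarrow> (\<forall>a<n. \<forall>c<q. Lk k $$ (a, c) = (\<Sum>l<m. gamma k l * conjugate (\<alpha> a c l)))"
    if "k < m" for k
    using Lk_carrier[OF that]
    by (auto simp: mat_eq_iff msum_def Amat_def coeff)
  then show ?thesis
    unfolding gamma_expansion_def by blast
qed

end

theorem proposition5p3:
  fixes \<L> :: "'a :: conjugatable_field mat \<Rightarrow> 'a mat"
    and n q m :: nat
    and L :: "'a mat"
    and Lk :: "nat \<Rightarrow> 'a mat"
    and \<alpha> :: "nat \<Rightarrow> nat \<Rightarrow> nat \<Rightarrow> 'a"
    and \<beta> :: "nat \<Rightarrow> nat \<Rightarrow> nat \<Rightarrow> 'a"
  assumes lin: "lin_map q n \<L>"
    and L_carrier: "L \<in> carrier_mat (n * n) (q * q)"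
    and L_matricization: "\<forall>V \<in> carrier_mat q q. L *\<^sub>v vec_cs V = vec_cs (\<L> V)"
    and m_rank: "m = vec_space.rank (q * n) (choi \<L> n q)"
    and Lk_carrier: "\<forall>k < m. Lk k \<in> carrier_mat n q"
    and alpha: "\<forall>i < n. \<forall>j < q. blk L n q i j = msum n q (\<lambda>k. \<alpha> i j k \<cdot>\<^sub>m Lk k) {..<m}"
    and beta: "\<forall>k < m. Lk k = msum n q (\<lambda>(i, j). \<beta> k i j \<cdot>\<^sub>m blk L n q i j) ({..<n} \<times> {..<q})"
  shows "(star_linear q \<L> \<longleftrightarrow>
            L = msum (n * n) (q * q) (\<lambda>k. kron (mconj (Lk k)) (Amat n q \<alpha> k)) {..<m})
       \<and> (star_linear q \<L> \<longleftrightarrow>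
            (\<forall>k < m. Lk k = msum n q
               (\<lambda>l. onesform n q (hadamard (Bmat n q \<beta> k) (mconj (Lk l))) \<cdot>\<^sub>m Amat n q \<alpha> l) {..<m}))
       \<and> (star_linear q \<L> \<longrightarrow>
            (\<forall>k < m. \<forall>l < m.
               onesform n q (hadamard (Bmat n q \<beta> k) (mconj (Lk l)))
             = onesform n q (hadamard (mconj (Bmat n q \<beta> l)) (Lk k))))"
proof -
  interpret choi_construction \<L> n q L m Lk \<alpha> \<beta>
    using assms by unfold_locales (auto simp: lin_map_def)
  have star_iff: "star_linear q \<L> \<longleftrightarrow> gamma_expansion"
    using star_linear_iff_hermitian_blocks hermitian_blocks_iff_gamma_expansion by simp
  have "onesform n q (hadamard (Bmat n q \<beta> k) (mconj (Lk l)))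
      = onesform n q (hadamard (mconj (Bmat n q \<beta> l)) (Lk k))"
    if gamma_expansion "k < m" "l < m" for k l
    using gamma_hermitian[OF that] onesform_hadamard_eq_gamma[OF \<open>l < m\<close>]
      onesform_hadamard_conj_eq_gamma[OF \<open>k < m\<close>] by simp
  then show ?thesis
    using star_iff star_linear_iff_hermitian_blocks L_eq_kron_sum_iff Lk_eq_msum_iff by blast
qed

end
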